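(* Let $p$ be a prime and $d>1$ an integer. Let $T_d$ be the $d$-th Chebyshev polynomial of the first kind, viewed as a self-map of $\mathbb{A}^1(\mathbb{F}_p)=\mathbb{F}_p$. Then $$\max_{x\in\mathbb{F}_p}t(T_d,x)=\max_q\left(\max\left(\left\lceil\frac{v_q(p-1)}{v_q(d)}\right\rceil,\left\lceil\frac{v_q(p+1)}{v_q(d)}\right\rceil\right)\right),$$ where $q$ ranges over the prime divisors of $d$ and $v_q$ is the $q$-adic valuation.
   Context: The $d$-th Chebyshev polynomial of the first kind $T_d\in\mathbb{Z}[z]$ is the monic degree-$d$ polynomial with $T_d(z+z^{-1})=z^d+z^{-d}$, reduced modulo $p$. For a self-map $f$ of a finite set and a point $x$, the tail $t(f,x)$ is the least integer $m\ge0$ such that $f^m(x)$ is periodic. *)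

theory Defs
  imports "HOL-Computational_Algebra.Computational_Algebra"
begin

text \<open>Chebyshev polynomials of the first kind in the normalisation of the paper:
  monic, T_d(z + 1/z) = z^d + z^(-d).  Recurrence T_0 = 2, T_1 = z,
  T_(n+2) = z T_(n+1) - T_n.\<close>
fun cheb :: "nat \<Rightarrow> int poly" where
  "cheb 0 = [:2:]"
| "cheb (Suc 0) = [:0, 1:]"
| "cheb (Suc (Suc n)) = [:0, 1:] * cheb (Suc n) - cheb n"

definition cheb_map :: "nat \<Rightarrow> nat \<Rightarrow> int \<Rightarrow> int" where
  "cheb_map p d x = poly (cheb d) x mod int p"

definition periodic_pt :: "('a \<Rightarrow> 'a) \<Rightarrow> 'a \<Rightarrow> bool" where
  "periodic_pt f y \<longleftrightarrow> (\<exists>n>0. (f ^^ n) y = y)"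

definition tail :: "('a \<Rightarrow> 'a) \<Rightarrow> 'a \<Rightarrow> nat" where
  "tail f x = (LEAST m. periodic_pt f ((f ^^ m) x))"

end

(*
  Every x in F_p can be written as z + 1/z with z in F_(p^2), and then the m-th iterate of T_d
  sends x to z^(d^m) + z^(-d^m). If r is the order of z, then z^A + z^(-A) = z^B + z^(-B) iff
  r divides A - B or A + B. Hence the m-th iterate of x is periodic iff d^(m+k) = +-d^m (mod r)
  for some k > 0, which happens iff v_q(r) <= m v_q(d) for every prime q dividing d: the tail of
  x is max_q ceil(v_q(r) / v_q(d)). The Frobenius fixes z + 1/z exactly when r divides p - 1 or
  p + 1, every such r occurs, and the bound is monotone in r under divisibility, so the largest
  tail is attained at r = p - 1 or r = p + 1. F_(p^2) is realised as pairs a + b sqrt n for a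
  quadratic non-residue n; the prime p = 2 is handled by direct computation.
*)

theory Submission
  imports Defs "HOL-Number_Theory.Number_Theory" "HOL-Algebra.Multiplicative_Group"
begin

section \<open>The least exponent of recurrence up to sign\<close>

definition max_val_ratio :: "nat \<Rightarrow> nat \<Rightarrow> nat" where
  "max_val_ratio d r =
     Max ((\<lambda>q. nat \<lceil>real (multiplicity q r) / real (multiplicity q d)\<rceil>) ` prime_factors d)"

lemma prime_factors_nonempty:
  assumes "(d::nat) > 1"
  shows "prime_factors d \<noteq> {}"
proof -
  obtain q where "prime q" "q dvd d"
    using assms prime_divisor_exists[of d] by auto
  then have "q \<in> prime_factors d"
    using assms by (simp add: in_prime_factors_iff)
  then show ?thesis
    by blast
qed

lemma max_val_ratio_le_iff:
  assumes "d > 1"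
  shows "max_val_ratio d r \<le> m \<longleftrightarrow> (\<forall>q \<in> prime_factors d. multiplicity q r \<le> m * multiplicity q d)"
proof -
  have "multiplicity q d > 0" if "q \<in> prime_factors d" for q
    using that by (auto simp: in_prime_factors_iff prime_multiplicity_gt_zero_iff)
  moreover have "prime_factors d \<noteq> {}"
    using assms by (rule prime_factors_nonempty)
  ultimately show ?thesis
    unfolding max_val_ratio_def by (subst Max_le_iff) (auto simp: pos_divide_le_eq simp flip: of_nat_mult)
qed

lemma max_val_ratio_mono:
  assumes "d > 1" "r dvd N" "N \<noteq> 0"
  shows "max_val_ratio d r \<le> max_val_ratio d N"
proof -
  have "multiplicity q r \<le> multiplicity q N" for q
    using assms by (intro dvd_imp_multiplicity_le) auto
  then show ?thesis
    using max_val_ratio_le_iff[OF assms(1)] le_trans by blast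
qed

(* For z of order r in a field, the m-th iterate of z + 1/z under u |-> u^d is periodic iff
   pm_recurrent r d m, by power_sum_eq_iff_ord_dvd. *)
definition pm_recurrent :: "nat \<Rightarrow> nat \<Rightarrow> nat \<Rightarrow> bool" where
  "pm_recurrent r d m \<longleftrightarrow> (\<exists>k>0. r dvd d ^ (k + m) - d ^ m \<or> r dvd d ^ (k + m) + d ^ m)"

lemma pm_recurrent_imp_multiplicity_le:
  assumes d: "d > 1" and "pm_recurrent r d m" and q: "q \<in> prime_factors d"
  shows "multiplicity q r \<le> m * multiplicity q d"
proof -
  obtain k where "k > 0" and "r dvd d ^ (k + m) - d ^ m \<or> r dvd d ^ (k + m) + d ^ m"
    using assms(2) unfolding pm_recurrent_def by blast
  then obtain E where r: "r dvd d ^ m * E" and cop: "coprime d E" and "E \<noteq> 0"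
  proof (elim disjE)
    assume "r dvd d ^ (k + m) - d ^ m"
    moreover have "d ^ (k + m) - d ^ m = d ^ m * (d ^ k - 1)"
      by (simp add: power_add diff_mult_distrib2 mult.commute)
    moreover have "d ^ k = Suc (d ^ k - 1)" and "d ^ k - 1 \<noteq> 0"
      using one_less_power[OF d \<open>k > 0\<close>] by simp_all
    then have "coprime (d ^ k) (d ^ k - 1)"
      by (metis coprime_Suc_left_nat)
    then have "coprime d (d ^ k - 1)"
      using \<open>k > 0\<close> by simp
    ultimately show ?thesis
      using that[of "d ^ k - 1"] \<open>d ^ k - 1 \<noteq> 0\<close> by simp
  next
    assume "r dvd d ^ (k + m) + d ^ m"
    moreover have "d ^ (k + m) + d ^ m = d ^ m * (d ^ k + 1)"
      by (simp add: power_add algebra_simps)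
    moreover have "coprime d (d ^ k + 1)"
      using \<open>k > 0\<close> coprime_power_left_iff[of d k "d ^ k + 1"] by simp
    ultimately show ?thesis
      using that[of "d ^ k + 1"] by simp
  qed
  have pq: "prime q" and "q dvd d" and "d \<noteq> 0"
    using q by (auto simp: in_prime_factors_iff)
  then have "\<not> q dvd E"
    using cop by (meson coprime_common_divisor not_prime_unit)
  have "multiplicity q r \<le> multiplicity q (d ^ m * E)"
    using r \<open>E \<noteq> 0\<close> \<open>d \<noteq> 0\<close> by (intro dvd_imp_multiplicity_le) auto
  also have "\<dots> = m * multiplicity q d"
    using pq \<open>E \<noteq> 0\<close> \<open>d \<noteq> 0\<close> \<open>\<not> q dvd E\<close>
    by (simp add: prime_elem_multiplicity_mult_distrib prime_elem_multiplicity_power_distrib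
        not_dvd_imp_multiplicity_0)
  finally show ?thesis .
qed

lemma split_coprime_part:
  fixes r d :: nat
  assumes "d > 0" "r > 0" and "\<forall>q \<in> prime_factors d. multiplicity q r \<le> m * multiplicity q d"
  shows "\<exists>g r'. r = g * r' \<and> g dvd d ^ m \<and> coprime d r'"
proof (intro exI conjI)
  define g where "g = gcd r (d ^ m)"
  show r: "r = g * (r div g)" and "g dvd d ^ m"
    by (simp_all add: g_def)
  show "coprime d (r div g)"
  proof (rule ccontr)
    assume "\<not> coprime d (r div g)"
    then obtain q where pq: "prime q" and "q dvd gcd d (r div g)"
      using prime_factor_nat coprime_iff_gcd_eq_1 by blast
    then have "q dvd d" and qr': "q dvd r div g"
      by simp_all
    then have qpf: "q \<in> prime_factors d"
      using assms(1) pq by (auto simp: in_prime_factors_iff)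
    define v where "v = multiplicity q r"
    have "v \<le> multiplicity q (d ^ m)"
      using assms(1,3) qpf pq by (simp add: v_def prime_elem_multiplicity_power_distrib)
    then have "q ^ v dvd g"
      by (simp add: g_def v_def multiplicity_dvd multiplicity_dvd')
    then have "q ^ v * q dvd g * (r div g)"
      using qr' by (rule mult_dvd_mono)
    then have "q ^ Suc v dvd r"
      using r by (simp add: mult.commute)
    then have "Suc v \<le> multiplicity q r"
      using assms(2) pq not_prime_unit by (intro multiplicity_geI) auto
    then show False
      by (simp add: v_def)
  qed
qed

lemma multiplicity_le_imp_pm_recurrent:
  assumes "d > 0" "r > 0" and "\<forall>q \<in> prime_factors d. multiplicity q r \<le> m * multiplicity q d"
  shows "pm_recurrent r d m"
proof -
  obtain g r' where r: "r = g * r'" and "g dvd d ^ m" and "coprime d r'"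
    using split_coprime_part assms by blast
  define k where "k = totient r'"
  have "k > 0"
    using assms(2) r by (simp add: k_def)
  have "[d ^ k = 1] (mod r')"
    using \<open>coprime d r'\<close> euler_theorem by (simp add: k_def)
  then have "g * r' dvd d ^ m * (d ^ k - 1)"
    using \<open>g dvd d ^ m\<close> cong_to_1_nat by (blast intro: mult_dvd_mono)
  also have "d ^ m * (d ^ k - 1) = d ^ (k + m) - d ^ m"
    by (simp add: power_add diff_mult_distrib2 mult.commute)
  finally show ?thesis
    using \<open>k > 0\<close> r unfolding pm_recurrent_def by blast
qed

lemma Least_pm_recurrent:
  assumes "d > 1" "r > 0"
  shows "(LEAST m. pm_recurrent r d m) = max_val_ratio d r"
proof (rule Least_equality)
  show "pm_recurrent r d (max_val_ratio d r)"
    using assms max_val_ratio_le_iff[OF assms(1)] by (intro multiplicity_le_imp_pm_recurrent) auto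
  show "max_val_ratio d r \<le> m" if "pm_recurrent r d m" for m
    using assms that max_val_ratio_le_iff[OF assms(1)] pm_recurrent_imp_multiplicity_le by blast
qed

lemma Max_eq_max_val_ratio:
  assumes "finite X" "d > 1" "N\<^sub>1 \<noteq> 0" "N\<^sub>2 \<noteq> 0"
    and "\<And>x. x \<in> X \<Longrightarrow> \<exists>r. (r dvd N\<^sub>1 \<or> r dvd N\<^sub>2) \<and> t x = max_val_ratio d r"
    and "\<exists>x \<in> X. t x = max_val_ratio d N\<^sub>1" "\<exists>x \<in> X. t x = max_val_ratio d N\<^sub>2"
  shows "Max (t ` X) = max (max_val_ratio d N\<^sub>1) (max_val_ratio d N\<^sub>2)"
proof (rule Max_eqI)
  fix s assume "s \<in> t ` X"
  then obtain r where "r dvd N\<^sub>1 \<or> r dvd N\<^sub>2" "s = max_val_ratio d r"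
    using assms(5) by blast
  then show "s \<le> max (max_val_ratio d N\<^sub>1) (max_val_ratio d N\<^sub>2)"
    using max_val_ratio_mono assms(2-4) by (metis le_max_iff_disj)
next
  show "max (max_val_ratio d N\<^sub>1) (max_val_ratio d N\<^sub>2) \<in> t ` X"
    using assms(6,7) by (metis image_eqI max_def)
qed (use assms(1) in simp)

lemma add_power_prime:
  fixes x y :: "'a :: comm_semiring_1"
  assumes "prime p"
  shows "\<exists>W. (x + y) ^ p = x ^ p + y ^ p + of_nat p * W"
proof -
  have p0: "p > 0"
    using assms prime_gt_0_nat by blast
  have "of_nat (p choose k) = of_nat p * (of_nat ((p choose k) div p) :: 'a)" if "k \<in> {1..<p}" for k
    using that dvd_choose_prime[of k p] assms p0 by (simp flip: of_nat_mult)
  then have "(\<Sum>k\<in>{1..<p}. of_nat (p choose k) * x ^ k * y ^ (p - k)) =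
      of_nat p * (\<Sum>k\<in>{1..<p}. of_nat ((p choose k) div p) * x ^ k * y ^ (p - k))"
    by (simp add: sum_distrib_left mult.assoc)
  moreover have "{..p} = insert p (insert 0 {1..<p})"
    using p0 by auto
  ultimately have "(x + y) ^ p = x ^ p + (y ^ p +
      of_nat p * (\<Sum>k\<in>{1..<p}. of_nat ((p choose k) div p) * x ^ k * y ^ (p - k)))"
    using p0 by (simp add: binomial_ring)
  then show ?thesis
    by (auto simp: add.assoc)
qed

lemma fermat_theorem_int:
  assumes "prime p" "\<not> int p dvd a"
  shows "[a ^ (p - 1) = 1] (mod int p)"
proof -
  define b where "b = nat (a mod int p)"
  have b: "int b = a mod int p"
    using assms prime_gt_0_nat by (simp add: b_def)
  then have "\<not> int p dvd int b"
    using assms(2) by (simp add: dvd_mod_iff)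
  then have "\<not> p dvd b"
    by simp
  then have "[int b ^ (p - 1) = 1] (mod int p)"
    using fermat_theorem[OF assms(1)] by (metis cong_int_iff of_nat_1 of_nat_power)
  moreover have "[int b ^ (p - 1) = a ^ (p - 1)] (mod int p)"
    using b by (intro cong_pow) (simp add: cong_def)
  ultimately show ?thesis
    by (meson cong_sym cong_trans)
qed

lemma fermat_little_int:
  assumes "prime p"
  shows "[a ^ p = a] (mod int p)"
proof (cases "int p dvd a")
  case True
  moreover have "int p dvd a ^ p"
    using True assms prime_gt_0_nat by (meson dvd_power dvd_trans)
  ultimately show ?thesis
    by (simp add: cong_def dvd_imp_mod_0)
next
  case False
  then have "[a ^ (p - 1) * a = 1 * a] (mod int p)"
    using fermat_theorem_int[OF assms] cong_scalar_right by blast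
  then show ?thesis
    using assms prime_gt_0_nat by (simp flip: power_Suc2)
qed

section \<open>Power sums of mutually inverse elements\<close>

lemma (in cring) power_sum_Suc_Suc:
  assumes "z \<in> carrier R" "w \<in> carrier R"
  shows "z [^] Suc (Suc k) \<oplus> w [^] Suc (Suc k) =
    (z \<oplus> w) \<otimes> (z [^] Suc k \<oplus> w [^] Suc k) \<ominus> (z \<otimes> w) \<otimes> (z [^] k \<oplus> w [^] k)"
proof -
  have "z [^] k \<in> carrier R" "w [^] k \<in> carrier R"
    using assms by simp_all
  then show ?thesis
    using assms by (simp only: nat_pow_Suc) algebra
qed

lemma (in domain) eq_or_eq_if_quadratic:
  assumes "y \<in> carrier R" "z \<in> carrier R" "w \<in> carrier R" "z \<otimes> w = \<one>"
    and "y \<otimes> y \<oplus> \<one> = (z \<oplus> w) \<otimes> y"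
  shows "y = z \<or> y = w"
proof -
  have "(y \<ominus> z) \<otimes> (y \<ominus> w) = (y \<otimes> y \<oplus> z \<otimes> w) \<ominus> (z \<oplus> w) \<otimes> y"
    using assms(1-3) by algebra
  also have "\<dots> = \<zero>"
    using assms by simp
  finally show ?thesis
    using assms(1-3) by (simp add: integral_iff)
qed

lemma (in domain) power_sum_eq_iff:
  fixes a b :: nat
  assumes "z \<in> carrier R" "w \<in> carrier R" "z \<otimes> w = \<one>"
  shows "z [^] a \<oplus> w [^] a = z [^] b \<oplus> w [^] b \<longleftrightarrow> z [^] a = z [^] b \<or> z [^] a = w [^] b"
proof -
  have inv: "z [^] k \<otimes> w [^] k = \<one>" for k :: nat
    using assms by (simp add: nat_pow_distrib[symmetric])
  have unique: "v = w [^] k" if "v \<in> carrier R" "z [^] k \<otimes> v = \<one>" for v and k :: nat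
    using inv[of k] that assms by (metis inv_unique m_comm nat_pow_closed)
  show ?thesis
  proof
    assume sum: "z [^] a \<oplus> w [^] a = z [^] b \<oplus> w [^] b"
    have "(z [^] a \<oplus> w [^] a) \<otimes> z [^] a = z [^] a \<otimes> z [^] a \<oplus> z [^] a \<otimes> w [^] a"
      using assms nat_pow_closed[of z a] nat_pow_closed[of w a] by algebra
    then have "z [^] a \<otimes> z [^] a \<oplus> \<one> = (z [^] a \<oplus> w [^] a) \<otimes> z [^] a"
      by (simp only: inv)
    then have "z [^] a \<otimes> z [^] a \<oplus> \<one> = (z [^] b \<oplus> w [^] b) \<otimes> z [^] a"
      by (simp only: sum)
    then show "z [^] a = z [^] b \<or> z [^] a = w [^] b"
      using assms inv[of b] by (intro eq_or_eq_if_quadratic) auto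
  next
    assume "z [^] a = z [^] b \<or> z [^] a = w [^] b"
    then show "z [^] a \<oplus> w [^] a = z [^] b \<oplus> w [^] b"
    proof
      assume "z [^] a = z [^] b"
      then show ?thesis
        using unique[of "w [^] a" b] inv[of a] assms by simp
    next
      assume "z [^] a = w [^] b"
      then have "w [^] a = z [^] b"
        using unique[of "z [^] b" a] inv[of b] assms by (simp add: m_comm)
      then show ?thesis
        using \<open>z [^] a = w [^] b\<close> assms by (simp add: a_comm)
    qed
  qed
qed

lemma (in field) power_sum_eq_iff_ord_dvd:
  assumes "z \<in> carrier R" "w \<in> carrier R" "z \<otimes> w = \<one>" "b \<le> a"
  shows "z [^] a \<oplus> w [^] a = z [^] b \<oplus> w [^] b \<longleftrightarrow>
    group.ord (mult_of R) z dvd a - b \<or> group.ord (mult_of R) z dvd a + b"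
proof -
  interpret M: group "mult_of R"
    by (rule field_mult_group)
  have zM: "z \<in> carrier (mult_of R)"
    using assms by (auto simp: zero_not_one)
  have ord: "z [^] k = \<one> \<longleftrightarrow> M.ord z dvd k" for k :: nat
    using M.pow_eq_id[OF zM] by (simp add: nat_pow_mult_of)
  have inv: "z [^] k \<otimes> w [^] k = \<one>" for k :: nat
    using assms by (simp add: nat_pow_distrib[symmetric])
  have z0: "z [^] b \<noteq> \<zero>"
    using inv[of b] assms by auto
  have pow_add: "z [^] a = z [^] (a - b) \<otimes> z [^] b" "z [^] (a + b) = z [^] a \<otimes> z [^] b"
    using assms by (simp_all add: nat_pow_mult)
  have "z [^] a = z [^] b \<longleftrightarrow> z [^] (a - b) \<otimes> z [^] b = \<one> \<otimes> z [^] b"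
    using assms pow_add(1) by simp
  also have "\<dots> \<longleftrightarrow> z [^] (a - b) = \<one>"
    using assms m_rcancel[OF z0, of "z [^] (a - b)" \<one>] by simp
  finally have eq_iff: "z [^] a = z [^] b \<longleftrightarrow> z [^] (a - b) = \<one>" .
  have "z [^] a = w [^] b \<longleftrightarrow> z [^] a \<otimes> z [^] b = w [^] b \<otimes> z [^] b"
    using assms m_rcancel[OF z0] by simp
  also have "\<dots> \<longleftrightarrow> z [^] (a + b) = \<one>"
    using inv[of b] assms pow_add(2) by (simp add: m_comm)
  finally have eq_inv_iff: "z [^] a = w [^] b \<longleftrightarrow> z [^] (a + b) = \<one>" .
  show ?thesis
    using power_sum_eq_iff[OF assms(1-3)] ord eq_iff eq_inv_iff by simp
qed

lemma (in field) exists_mult_of_generator: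
  assumes fin: "finite (carrier R)"
  shows "\<exists>g \<in> carrier (mult_of R). group.ord (mult_of R) g = order (mult_of R) \<and>
    (\<forall>u \<in> carrier (mult_of R). \<exists>i::nat. u = g [^] i)"
proof -
  interpret M: group "mult_of R"
    by (rule field_mult_group)
  have finM: "finite (carrier (mult_of R))"
    using fin by simp
  obtain g where g: "g \<in> carrier (mult_of R)"
    and gen: "carrier (mult_of R) = {g [^] i | i::nat. i \<in> UNIV}"
    using finite_field_mult_group_has_gen[OF fin] by (auto simp: nat_pow_mult_of)
  have "carrier (mult_of R) = (\<lambda>i. g [^]\<^bsub>mult_of R\<^esub> i) ` {0 .. M.ord g - 1}"
    using gen M.ord_elems[OF finM g] by (auto simp: nat_pow_mult_of)
  then have "order (mult_of R) \<le> M.ord g"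
    using M.ord_ge_1[OF finM g] card_image_le[of "{0 .. M.ord g - 1}"] unfolding order_def
    by (metis card_atLeastAtMost diff_zero finite_atLeastAtMost le_add_diff_inverse2 Suc_eq_plus1)
  then have "M.ord g = order (mult_of R)"
    using M.ord_le_group_order[OF finM g] by simp
  then show ?thesis
    using g gen by blast
qed

lemma (in field) exists_elem_of_ord:
  assumes "finite (carrier R)" "N dvd order (mult_of R)"
  shows "\<exists>z \<in> carrier (mult_of R). group.ord (mult_of R) z = N"
proof -
  interpret M: group "mult_of R"
    by (rule field_mult_group)
  obtain g where g: "g \<in> carrier (mult_of R)" and og: "M.ord g = order (mult_of R)"
    using exists_mult_of_generator[OF assms(1)] by blast
  obtain e where e: "order (mult_of R) = N * e"
    using assms(2) by blast
  have "order (mult_of R) \<noteq> 0"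
    using M.order_gt_0_iff_finite finite_mult_of[OF assms(1)] by simp
  then have "M.ord (g [^]\<^bsub>mult_of R\<^esub> e) = N"
    using M.ord_pow[OF g] og e by simp
  then show ?thesis
    using g by blast
qed

lemma (in field) square_if_pow_eq_one:
  assumes fin: "finite (carrier R)" and c: "c \<in> carrier (mult_of R)" and "c [^] k = \<one>"
    and "order (mult_of R) = k * e" and "even e" and "k > 0"
  shows "\<exists>t \<in> carrier R. t \<otimes> t = c"
proof -
  interpret M: group "mult_of R"
    by (rule field_mult_group)
  obtain g where g: "g \<in> carrier (mult_of R)" and og: "M.ord g = order (mult_of R)"
    and gen: "\<forall>u \<in> carrier (mult_of R). \<exists>i::nat. u = g [^] i"
    using exists_mult_of_generator[OF fin] by blast
  obtain i :: nat where i: "c = g [^] i"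
    using gen c by blast
  have "g [^] (i * k) = \<one>"
    using assms(3) g i by (simp add: nat_pow_pow)
  then have "k * e dvd k * i"
    using M.pow_eq_id[OF g] og assms(4) by (simp add: nat_pow_mult_of mult.commute)
  then have "even i"
    using \<open>even e\<close> \<open>k > 0\<close> by (meson dvd_trans nat_mult_dvd_cancel1)
  then obtain j where "i = j + j"
    by (metis mult_2 evenE)
  then show ?thesis
    using g i by (intro bexI[of _ "g [^] j"]) (auto simp: nat_pow_mult)
qed

section \<open>The field with p^2 elements\<close>

(* A pair (a, b) stands for a + b sqrt n; quad_ring P n is (Z/P)[sqrt n]. *)
definition qmult :: "int \<Rightarrow> int \<times> int \<Rightarrow> int \<times> int \<Rightarrow> int \<times> int" where
  "qmult n u v = (fst u * fst v + n * snd u * snd v, fst u * snd v + snd u * fst v)"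

definition qadd :: "int \<times> int \<Rightarrow> int \<times> int \<Rightarrow> int \<times> int" where
  "qadd u v = (fst u + fst v, snd u + snd v)"

definition qmod :: "int \<Rightarrow> int \<times> int \<Rightarrow> int \<times> int" where
  "qmod P u = (fst u mod P, snd u mod P)"

definition quad_ring :: "int \<Rightarrow> int \<Rightarrow> (int \<times> int) ring" where
  "quad_ring P n = \<lparr>carrier = {0..<P} \<times> {0..<P},
     mult = (\<lambda>u v. qmod P (qmult n u v)), one = (1, 0), zero = (0, 0),
     add = (\<lambda>u v. qmod P (qadd u v))\<rparr>"

lemma quad_ring_simps:
  "carrier (quad_ring P n) = {0..<P} \<times> {0..<P}"
  "u \<otimes>\<^bsub>quad_ring P n\<^esub> v = qmod P (qmult n u v)"
  "u \<oplus>\<^bsub>quad_ring P n\<^esub> v = qmod P (qadd u v)"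
  "\<one>\<^bsub>quad_ring P n\<^esub> = (1, 0)"
  "\<zero>\<^bsub>quad_ring P n\<^esub> = (0, 0)"
  by (simp_all add: quad_ring_def)

lemma qmod_absorb:
  "qmod P (qmult n (qmod P u) v) = qmod P (qmult n u v)"
  "qmod P (qmult n u (qmod P v)) = qmod P (qmult n u v)"
  "qmod P (qadd (qmod P u) v) = qmod P (qadd u v)"
  "qmod P (qadd u (qmod P v)) = qmod P (qadd u v)"
  unfolding qmod_def qmult_def qadd_def
  by (simp_all add: cong_def[symmetric] cong_add cong_mult cong_mod_left)

lemma qmult_assoc: "qmult n (qmult n u v) w = qmult n u (qmult n v w)"
  by (simp add: qmult_def algebra_simps)

lemma qmult_qadd_distrib: "qmult n (qadd u v) w = qadd (qmult n u w) (qmult n v w)"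
  by (simp add: qmult_def qadd_def algebra_simps)

lemma qmod_in_carrier: "P > 0 \<Longrightarrow> qmod P u \<in> {0..<P} \<times> {0..<P}"
  by (simp add: qmod_def)

lemma cring_quad_ring:
  assumes "P > 1"
  shows "cring (quad_ring P n)"
proof (rule cringI)
  show "abelian_group (quad_ring P n)"
  proof (rule abelian_groupI)
    fix x assume "x \<in> carrier (quad_ring P n)"
    then show "\<exists>y\<in>carrier (quad_ring P n). y \<oplus>\<^bsub>quad_ring P n\<^esub> x = \<zero>\<^bsub>quad_ring P n\<^esub>"
      using assms by (intro bexI[of _ "qmod P (- fst x, - snd x)"])
         (auto simp: quad_ring_simps qmod_def qadd_def mod_simps)
  qed (use assms in \<open>auto simp: quad_ring_simps qmod_absorb qmod_def qadd_def mod_simps ac_simps\<close>)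
  show "comm_monoid (quad_ring P n)"
  proof (rule comm_monoidI)
    fix x y z
    show "x \<otimes>\<^bsub>quad_ring P n\<^esub> y \<otimes>\<^bsub>quad_ring P n\<^esub> z =
        x \<otimes>\<^bsub>quad_ring P n\<^esub> (y \<otimes>\<^bsub>quad_ring P n\<^esub> z)"
      by (simp add: quad_ring_simps qmod_absorb qmult_assoc)
  qed (use assms in \<open>auto simp: quad_ring_simps qmod_def qmult_def ac_simps\<close>)
  fix x y z assume "x \<in> carrier (quad_ring P n)" "y \<in> carrier (quad_ring P n)" "z \<in> carrier (quad_ring P n)"
  show "(x \<oplus>\<^bsub>quad_ring P n\<^esub> y) \<otimes>\<^bsub>quad_ring P n\<^esub> z =
      x \<otimes>\<^bsub>quad_ring P n\<^esub> z \<oplus>\<^bsub>quad_ring P n\<^esub> y \<otimes>\<^bsub>quad_ring P n\<^esub> z"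
    by (simp add: quad_ring_simps qmod_absorb qmult_qadd_distrib)
qed

(* Evaluation at sqrt n is a ring homomorphism Z[X] -> Z[sqrt n]; it transports the binomial
   expansion of (a + b X)^p, which yields the Frobenius below. *)
definition eval_sqrt :: "int \<Rightarrow> int poly \<Rightarrow> int \<times> int" where
  "eval_sqrt n f = foldr (\<lambda>c acc. qadd (c, 0) (qmult n (0, 1) acc)) (coeffs f) (0, 0)"

lemma eval_sqrt_0 [simp]: "eval_sqrt n 0 = (0, 0)"
  by (simp add: eval_sqrt_def)

lemma eval_sqrt_pCons: "eval_sqrt n (pCons c f) = qadd (c, 0) (qmult n (0, 1) (eval_sqrt n f))"
proof (cases "c = 0 \<and> f = 0")
  case True
  then show ?thesis by (simp add: eval_sqrt_def qadd_def qmult_def)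
next
  case False
  then have "coeffs (pCons c f) = c # coeffs f"
    by (auto simp: cCons_def)
  then show ?thesis by (simp add: eval_sqrt_def)
qed

lemma eval_sqrt_add: "eval_sqrt n (f + g) = qadd (eval_sqrt n f) (eval_sqrt n g)"
  by (induction f g rule: poly_induct2) (simp_all add: eval_sqrt_pCons qadd_def qmult_def algebra_simps)

lemma eval_sqrt_smult: "eval_sqrt n (Polynomial.smult c f) = qmult n (c, 0) (eval_sqrt n f)"
  by (induction f) (simp_all add: eval_sqrt_pCons qadd_def qmult_def algebra_simps)

lemma eval_sqrt_mult: "eval_sqrt n (f * g) = qmult n (eval_sqrt n f) (eval_sqrt n g)"
  by (induction f) (simp_all add: eval_sqrt_pCons eval_sqrt_add eval_sqrt_smult qadd_def qmult_def algebra_simps)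

lemma eval_sqrt_linear: "eval_sqrt n [:a, b:] = (a, b)"
  by (simp add: eval_sqrt_pCons qadd_def qmult_def)

lemma eval_sqrt_const: "eval_sqrt n [:c:] = (c, 0)"
  by (simp add: eval_sqrt_pCons qadd_def qmult_def)

fun qpow :: "int \<Rightarrow> int \<times> int \<Rightarrow> nat \<Rightarrow> int \<times> int" where
  "qpow n u 0 = (1, 0)"
| "qpow n u (Suc k) = qmult n (qpow n u k) u"

lemma eval_sqrt_power: "eval_sqrt n (f ^ k) = qpow n (eval_sqrt n f) k"
  using eval_sqrt_const[of n 1]
  by (induction k) (simp_all add: eval_sqrt_mult one_pCons qmult_def mult.commute)

lemma qpow_real: "qpow n (a, 0) k = (a ^ k, 0)"
  by (induction k) (simp_all add: qmult_def)

lemma qpow_imag: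
  "qpow n (0, b) k = (if even k then (b ^ k * n ^ (k div 2), 0) else (0, b ^ k * n ^ (k div 2)))"
  by (induction k) (auto simp: qmult_def elim: oddE)

(* By Euler's criterion n is a non-residue mod p, so X^2 - n is irreducible over F_p. *)
locale fp2 =
  fixes p :: nat and n :: int
  assumes prime: "prime p" and p_gt_2: "p > 2"
    and nonresidue: "[n ^ ((p - 1) div 2) = - 1] (mod int p)"
begin

abbreviation "P \<equiv> int p"
abbreviation "F \<equiv> quad_ring (int p) n"

lemma P_gt_1: "P > 1"
  using p_gt_2 by simp

lemma odd_p: "odd p"
  using p_gt_2 prime prime_odd_nat by blast

lemma qpow_prime_conj: "qmod P (qpow n (a, b) p) = qmod P (a, - b)"
proof -
  obtain W where W: "([:a:] + [:0, b:]) ^ p = [:a:] ^ p + [:0, b:] ^ p + of_nat p * W"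
    using add_power_prime[OF prime] by blast
  have "p div 2 = (p - 1) div 2"
    using odd_p by (auto elim: oddE)
  then have "qpow n (0, b) p = (0, b ^ p * n ^ ((p - 1) div 2))"
    using odd_p by (simp add: qpow_imag)
  moreover have "qpow n (a, b) p = eval_sqrt n (([:a:] + [:0, b:]) ^ p)"
    by (simp add: eval_sqrt_power eval_sqrt_linear)
  ultimately have "qpow n (a, b) p =
      (a ^ p + P * fst (eval_sqrt n W), b ^ p * n ^ ((p - 1) div 2) + P * snd (eval_sqrt n W))"
    unfolding W
    by (simp add: eval_sqrt_add eval_sqrt_power eval_sqrt_mult eval_sqrt_const eval_sqrt_linear
        of_nat_poly eval_sqrt_smult qpow_real qadd_def qmult_def)
  moreover have "[a ^ p = a] (mod P)"
    using fermat_little_int[OF prime] .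
  moreover have "[b ^ p * n ^ ((p - 1) div 2) = b * - 1] (mod P)"
    using fermat_little_int[OF prime] nonresidue by (rule cong_mult)
  ultimately show ?thesis
    by (simp add: qmod_def cong_def)
qed

lemma not_cong_nonresidue_square:
  assumes "\<not> P dvd b"
  shows "\<not> [a ^ 2 = n * b ^ 2] (mod P)"
proof
  assume c: "[a ^ 2 = n * b ^ 2] (mod P)"
  define m where "m = (p - 1) div 2"
  have "2 * m = p - 1"
    using odd_p by (simp add: m_def)
  then have "[a ^ (p - 1) = n ^ m * b ^ (p - 1)] (mod P)"
    using cong_pow[OF c, of m] by (simp add: power_mult[symmetric] power_mult_distrib)
  moreover have "[n ^ m * b ^ (p - 1) = - 1 * 1] (mod P)"
    using nonresidue fermat_theorem_int[OF prime assms] unfolding m_def by (rule cong_mult)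
  ultimately have a: "[a ^ (p - 1) = - 1] (mod P)"
    by (simp add: cong_trans)
  show False
  proof (cases "P dvd a")
    case True
    then have "P dvd a ^ (p - 1)"
      using p_gt_2 dvd_trans[OF True dvd_power[of "p - 1"]] by simp
    then show False
      using a P_gt_1 by (simp add: cong_dvd_iff)
  next
    case False
    then have "[1 = - 1] (mod P)"
      using a fermat_theorem_int[OF prime] by (meson cong_sym cong_trans)
    then have "P dvd 2"
      by (simp add: cong_iff_dvd_diff)
    then show False
      using p_gt_2 by (auto dest: zdvd_imp_le)
  qed
qed

lemma norm_not_dvd:
  assumes "(a, b) \<in> carrier F" "(a, b) \<noteq> (0, 0)"
  shows "\<not> P dvd a ^ 2 - n * b ^ 2"
proof
  assume "P dvd a ^ 2 - n * b ^ 2"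
  then have c: "[a ^ 2 = n * b ^ 2] (mod P)"
    by (simp add: cong_iff_dvd_diff)
  then have "P dvd b"
    using not_cong_nonresidue_square by blast
  then have "P dvd a ^ 2"
    using c by (simp add: cong_dvd_iff power2_eq_square)
  then have "P dvd a"
    using prime prime_dvd_power[of P a 2] by simp
  have "x = 0" if "x \<in> {0..<P}" "P dvd x" for x
    using that by (auto dest: zdvd_imp_le)
  then show False
    using \<open>P dvd a\<close> \<open>P dvd b\<close> assms by (auto simp: quad_ring_simps)
qed

lemma field_F: "field F"
proof -
  interpret cring F
    using cring_quad_ring P_gt_1 .
  show ?thesis
  proof (rule cring_fieldI2)
    show "\<zero>\<^bsub>F\<^esub> \<noteq> \<one>\<^bsub>F\<^esub>"
      by (simp add: quad_ring_simps)
  next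
    fix u assume u: "u \<in> carrier F" "u \<noteq> \<zero>\<^bsub>F\<^esub>"
    obtain a b where ab: "u = (a, b)"
      by force
    have "coprime (a ^ 2 - n * b ^ 2) P"
      using norm_not_dvd u ab prime by (simp add: quad_ring_simps prime_imp_coprime coprime_commute)
    then obtain c where c: "[(a ^ 2 - n * b ^ 2) * c = 1] (mod P)"
      using cong_solve_coprime_int by blast
    have "u \<otimes>\<^bsub>F\<^esub> qmod P (a * c, - b * c) = qmod P ((a ^ 2 - n * b ^ 2) * c, 0)"
      by (simp add: quad_ring_simps qmod_absorb ab) (simp add: qmult_def power2_eq_square algebra_simps)
    also have "\<dots> = \<one>\<^bsub>F\<^esub>"
      using c P_gt_1 by (simp add: qmod_def cong_def quad_ring_simps)
    finally show "\<exists>v\<in>carrier F. u \<otimes>\<^bsub>F\<^esub> v = \<one>\<^bsub>F\<^esub>"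
      using P_gt_1 qmod_in_carrier[of P] by (intro bexI[of _ "qmod P (a * c, - b * c)"]) (auto simp: quad_ring_simps)
  qed
qed

end

sublocale fp2 \<subseteq> F: field "quad_ring (int p) n"
  by (rule field_F)

context fp2
begin

lemma finite_F: "finite (carrier F)"
  by (simp add: quad_ring_simps)

lemma order_mult_of_F: "order (mult_of F) = (p - 1) * (p + 1)"
  using F.order_mult_of[OF finite_F] unfolding order_def
  by (simp add: quad_ring_simps card_cartesian_product algebra_simps power2_eq_square)

lemma F_pow_prime: "u \<in> carrier F \<Longrightarrow> u [^]\<^bsub>F\<^esub> p = qmod P (fst u, - snd u)"
proof -
  assume u: "u \<in> carrier F"
  have "u [^]\<^bsub>F\<^esub> k = qmod P (qpow n u k)" for k
  proof (induction k)
    case 0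
    then show ?case using P_gt_1 by (simp add: quad_ring_simps qmod_def)
  next
    case (Suc k)
    then show ?case by (simp add: quad_ring_simps qmod_absorb)
  qed
  then show ?thesis
    using qpow_prime_conj[of "fst u" "snd u"] by simp
qed

definition embed :: "int \<Rightarrow> int \<times> int" where
  "embed x = (x mod P, 0)"

lemma embed_carrier [simp]: "embed x \<in> carrier F"
  using P_gt_1 by (simp add: embed_def quad_ring_simps)

lemma embed_eq_iff: "embed a = embed b \<longleftrightarrow> a mod P = b mod P"
  by (simp add: embed_def)

lemma embed_add: "embed (a + b) = embed a \<oplus>\<^bsub>F\<^esub> embed b"
  by (simp add: embed_def quad_ring_simps qmod_def qadd_def mod_simps)

lemma embed_mult: "embed (a * b) = embed a \<otimes>\<^bsub>F\<^esub> embed b"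
  by (simp add: embed_def quad_ring_simps qmod_def qmult_def mod_simps)

lemma embed_one: "embed 1 = \<one>\<^bsub>F\<^esub>"
  using P_gt_1 by (simp add: embed_def quad_ring_simps)

lemma embed_diff: "embed (a - b) = embed a \<ominus>\<^bsub>F\<^esub> embed b"
proof -
  have "embed (- b) \<oplus>\<^bsub>F\<^esub> embed b = \<zero>\<^bsub>F\<^esub>"
    by (simp add: embed_add[symmetric]) (simp add: embed_def quad_ring_simps)
  then have "embed (- b) = \<ominus>\<^bsub>F\<^esub> embed b"
    by (intro F.minus_equality[symmetric]) auto
  then show ?thesis
    using embed_add[of a "- b"] by (simp add: F.minus_eq)
qed

lemma embed_pow: "embed a [^]\<^bsub>F\<^esub> k = embed (a ^ k)"
  by (induction k) (simp_all add: embed_one embed_mult[symmetric] mult.commute)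

lemma F_pow_prime_add:
  assumes "u \<in> carrier F" "v \<in> carrier F"
  shows "(u \<oplus>\<^bsub>F\<^esub> v) [^]\<^bsub>F\<^esub> p = u [^]\<^bsub>F\<^esub> p \<oplus>\<^bsub>F\<^esub> v [^]\<^bsub>F\<^esub> p"
proof -
  have "u \<oplus>\<^bsub>F\<^esub> v \<in> carrier F"
    using assms by simp
  then have "(u \<oplus>\<^bsub>F\<^esub> v) [^]\<^bsub>F\<^esub> p = qmod P (fst (u \<oplus>\<^bsub>F\<^esub> v), - snd (u \<oplus>\<^bsub>F\<^esub> v))"
    by (rule F_pow_prime)
  also have "\<dots> = qmod P (qadd (fst u, - snd u) (fst v, - snd v))"
    by (simp add: quad_ring_simps qmod_def qadd_def mod_simps)
  also have "\<dots> = u [^]\<^bsub>F\<^esub> p \<oplus>\<^bsub>F\<^esub> v [^]\<^bsub>F\<^esub> p"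
    using assms by (simp add: F_pow_prime quad_ring_simps qmod_absorb)
  finally show ?thesis .
qed

lemma pow_prime_eq_self_iff:
  assumes u: "u \<in> carrier F"
  shows "u [^]\<^bsub>F\<^esub> p = u \<longleftrightarrow> (\<exists>x \<in> {0..<P}. u = embed x)"
proof
  obtain a b where ab: "u = (a, b)" and range: "a \<in> {0..<P}" "b \<in> {0..<P}"
    using u by (auto simp: quad_ring_simps)
  assume "u [^]\<^bsub>F\<^esub> p = u"
  then have b: "(- b) mod P = b"
    using F_pow_prime[OF u] ab by (simp add: qmod_def)
  have "b = 0"
  proof (rule ccontr)
    assume "b \<noteq> 0"
    then have "(- b) mod P = P - b"
      using range by (simp add: zmod_zminus1_eq_if)
    then have "P = 2 * b"
      using b by simp
    moreover have "odd P"
      using odd_p by simp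
    ultimately show False
      by simp
  qed
  then show "\<exists>x \<in> {0..<P}. u = embed x"
    using ab range by (auto simp: embed_def)
next
  assume "\<exists>x \<in> {0..<P}. u = embed x"
  then show "u [^]\<^bsub>F\<^esub> p = u"
    using fermat_little_int[OF prime] by (auto simp: embed_pow embed_eq_iff cong_def)
qed

lemma trace_in_embed_iff:
  assumes "z \<in> carrier F" "w \<in> carrier F" "z \<otimes>\<^bsub>F\<^esub> w = \<one>\<^bsub>F\<^esub>"
  shows "(\<exists>x \<in> {0..<P}. z \<oplus>\<^bsub>F\<^esub> w = embed x) \<longleftrightarrow>
    group.ord (mult_of F) z dvd p - 1 \<or> group.ord (mult_of F) z dvd p + 1"
proof -
  have "(\<exists>x \<in> {0..<P}. z \<oplus>\<^bsub>F\<^esub> w = embed x) \<longleftrightarrow>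
      z [^]\<^bsub>F\<^esub> p \<oplus>\<^bsub>F\<^esub> w [^]\<^bsub>F\<^esub> p = z [^]\<^bsub>F\<^esub> (1::nat) \<oplus>\<^bsub>F\<^esub> w [^]\<^bsub>F\<^esub> (1::nat)"
    using assms by (simp add: pow_prime_eq_self_iff[symmetric] F_pow_prime_add)
  also have "\<dots> \<longleftrightarrow> group.ord (mult_of F) z dvd p - 1 \<or> group.ord (mult_of F) z dvd p + 1"
    using assms p_gt_2 by (intro F.power_sum_eq_iff_ord_dvd) auto
  finally show ?thesis .
qed

lemma embed_is_square: "\<exists>t \<in> carrier F. t \<otimes>\<^bsub>F\<^esub> t = embed c"
proof (cases "embed c = \<zero>\<^bsub>F\<^esub>")
  case True
  then show ?thesis
    by (intro bexI[of _ "\<zero>\<^bsub>F\<^esub>"]) auto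
next
  case False
  then have "\<not> P dvd c"
    by (auto simp: embed_def quad_ring_simps dvd_eq_mod_eq_0)
  then have "embed c [^]\<^bsub>F\<^esub> (p - 1) = \<one>\<^bsub>F\<^esub>"
    using fermat_theorem_int[OF prime] by (simp add: embed_pow embed_one[symmetric] embed_eq_iff cong_def)
  moreover have "even (p + 1)"
    using odd_p by simp
  ultimately show ?thesis
    using False p_gt_2 by (intro F.square_if_pow_eq_one[OF finite_F _ _ order_mult_of_F]) auto
qed

(* z and w are (x +- t)/2 with t^2 = x^2 - 4, the roots of Y^2 - x Y + 1. *)
lemma exists_inverse_pair:
  "\<exists>z w. z \<in> carrier F \<and> w \<in> carrier F \<and> z \<otimes>\<^bsub>F\<^esub> w = \<one>\<^bsub>F\<^esub> \<and> z \<oplus>\<^bsub>F\<^esub> w = embed x"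
proof -
  obtain t where t: "t \<in> carrier F" "t \<otimes>\<^bsub>F\<^esub> t = embed (x ^ 2 - 4)"
    using embed_is_square by blast
  define h where "h = embed ((P + 1) div 2)"
  have "2 * ((P + 1) div 2) = P + 1"
    using odd_p by (auto elim!: oddE)
  then have h: "h \<in> carrier F" "embed 2 \<otimes>\<^bsub>F\<^esub> h = \<one>\<^bsub>F\<^esub>"
    by (simp_all add: h_def embed_mult[symmetric] embed_one[symmetric] embed_eq_iff)
  define z where "z = (embed x \<oplus>\<^bsub>F\<^esub> t) \<otimes>\<^bsub>F\<^esub> h"
  define w where "w = (embed x \<ominus>\<^bsub>F\<^esub> t) \<otimes>\<^bsub>F\<^esub> h"
  have x: "embed x \<in> carrier F" "embed 2 \<in> carrier F"
    by simp_all
  have "z \<oplus>\<^bsub>F\<^esub> w = (embed x \<oplus>\<^bsub>F\<^esub> embed x) \<otimes>\<^bsub>F\<^esub> h"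
    unfolding z_def w_def using t(1) h(1) x by algebra
  also have "embed x \<oplus>\<^bsub>F\<^esub> embed x = embed x \<otimes>\<^bsub>F\<^esub> embed 2"
    by (simp add: embed_add[symmetric] embed_mult[symmetric] mult_2_right)
  also have "(embed x \<otimes>\<^bsub>F\<^esub> embed 2) \<otimes>\<^bsub>F\<^esub> h = embed x"
    using h x by (simp add: F.m_assoc)
  finally have sum: "z \<oplus>\<^bsub>F\<^esub> w = embed x" .
  have "z \<otimes>\<^bsub>F\<^esub> w = (embed x \<otimes>\<^bsub>F\<^esub> embed x \<ominus>\<^bsub>F\<^esub> t \<otimes>\<^bsub>F\<^esub> t) \<otimes>\<^bsub>F\<^esub> (h \<otimes>\<^bsub>F\<^esub> h)"
    unfolding z_def w_def using t(1) h(1) x by algebra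
  also have "embed x \<otimes>\<^bsub>F\<^esub> embed x \<ominus>\<^bsub>F\<^esub> t \<otimes>\<^bsub>F\<^esub> t = embed 2 \<otimes>\<^bsub>F\<^esub> embed 2"
    using t by (simp add: embed_mult[symmetric] embed_diff[symmetric] power2_eq_square)
  also have "(embed 2 \<otimes>\<^bsub>F\<^esub> embed 2) \<otimes>\<^bsub>F\<^esub> (h \<otimes>\<^bsub>F\<^esub> h) =
      (embed 2 \<otimes>\<^bsub>F\<^esub> h) \<otimes>\<^bsub>F\<^esub> (embed 2 \<otimes>\<^bsub>F\<^esub> h)"
    using h(1) x by algebra
  finally have "z \<otimes>\<^bsub>F\<^esub> w = \<one>\<^bsub>F\<^esub>"
    using h(2) by simp
  moreover have "z \<in> carrier F" "w \<in> carrier F"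
    using t(1) h(1) by (simp_all add: z_def w_def)
  ultimately show ?thesis
    using sum by blast
qed

section \<open>Tails of Chebyshev maps over F_p\<close>

lemma cheb_power_sum:
  assumes "z \<in> carrier F" "w \<in> carrier F" "z \<otimes>\<^bsub>F\<^esub> w = \<one>\<^bsub>F\<^esub>" "z \<oplus>\<^bsub>F\<^esub> w = embed x"
  shows "z [^]\<^bsub>F\<^esub> k \<oplus>\<^bsub>F\<^esub> w [^]\<^bsub>F\<^esub> k = embed (poly (cheb k) x)"
proof (induction k rule: cheb.induct)
  case 1
  show ?case
    using assms by (simp add: embed_one[symmetric] embed_add[symmetric])
next
  case 2
  show ?case
    using assms by simp
next
  case (3 k)
  have "z [^]\<^bsub>F\<^esub> Suc (Suc k) \<oplus>\<^bsub>F\<^esub> w [^]\<^bsub>F\<^esub> Suc (Suc k) =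
      embed x \<otimes>\<^bsub>F\<^esub> embed (poly (cheb (Suc k)) x) \<ominus>\<^bsub>F\<^esub> embed (poly (cheb k) x)"
    using F.power_sum_Suc_Suc[of z w k] assms 3 by simp
  then show ?case
    by (simp add: embed_mult[symmetric] embed_diff[symmetric])
qed

lemma cheb_compose_mod:
  "poly (cheb d) (poly (cheb j) x mod P) mod P = poly (cheb (j * d)) x mod P"
proof -
  obtain z w where zw: "z \<in> carrier F" "w \<in> carrier F" "z \<otimes>\<^bsub>F\<^esub> w = \<one>\<^bsub>F\<^esub>"
    and sum: "z \<oplus>\<^bsub>F\<^esub> w = embed x"
    using exists_inverse_pair by blast
  have zw_j: "z [^]\<^bsub>F\<^esub> j \<in> carrier F" "w [^]\<^bsub>F\<^esub> j \<in> carrier F"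
      "z [^]\<^bsub>F\<^esub> j \<otimes>\<^bsub>F\<^esub> w [^]\<^bsub>F\<^esub> j = \<one>\<^bsub>F\<^esub>"
    using zw by (simp_all add: F.nat_pow_distrib[symmetric])
  have "z [^]\<^bsub>F\<^esub> j \<oplus>\<^bsub>F\<^esub> w [^]\<^bsub>F\<^esub> j = embed (poly (cheb j) x mod P)"
    using cheb_power_sum[OF zw sum] by (simp add: embed_eq_iff)
  then have "embed (poly (cheb d) (poly (cheb j) x mod P)) =
      (z [^]\<^bsub>F\<^esub> j) [^]\<^bsub>F\<^esub> d \<oplus>\<^bsub>F\<^esub> (w [^]\<^bsub>F\<^esub> j) [^]\<^bsub>F\<^esub> d"
    using cheb_power_sum[OF zw_j] by simp
  also have "\<dots> = embed (poly (cheb (j * d)) x)"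
    using cheb_power_sum[OF zw sum, of "j * d"] zw by (simp add: F.nat_pow_pow)
  finally show ?thesis
    by (simp add: embed_eq_iff)
qed

lemma cheb_map_iterate:
  assumes "x \<in> {0..<P}"
  shows "(cheb_map p d ^^ m) x = poly (cheb (d ^ m)) x mod P"
  using assms by (induction m) (simp_all add: cheb_map_def cheb_compose_mod mult.commute)

lemma periodic_iff_pm_recurrent:
  assumes "z \<in> carrier F" "w \<in> carrier F" "z \<otimes>\<^bsub>F\<^esub> w = \<one>\<^bsub>F\<^esub>" "z \<oplus>\<^bsub>F\<^esub> w = embed x"
    and "x \<in> {0..<P}" "d > 0"
  shows "periodic_pt (cheb_map p d) ((cheb_map p d ^^ m) x) \<longleftrightarrow>
    pm_recurrent (group.ord (mult_of F) z) d m"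
proof -
  have "d ^ m \<le> d ^ (k + m)" for k
    using assms(6) by (simp add: power_increasing)
  then have "(z [^]\<^bsub>F\<^esub> d ^ (k + m) \<oplus>\<^bsub>F\<^esub> w [^]\<^bsub>F\<^esub> d ^ (k + m) =
        z [^]\<^bsub>F\<^esub> d ^ m \<oplus>\<^bsub>F\<^esub> w [^]\<^bsub>F\<^esub> d ^ m) \<longleftrightarrow>
      group.ord (mult_of F) z dvd d ^ (k + m) - d ^ m \<or> group.ord (mult_of F) z dvd d ^ (k + m) + d ^ m"
    for k
    using assms(1-3) by (intro F.power_sum_eq_iff_ord_dvd)
  moreover have "(cheb_map p d ^^ (k + m)) x = (cheb_map p d ^^ m) x \<longleftrightarrow>
      z [^]\<^bsub>F\<^esub> d ^ (k + m) \<oplus>\<^bsub>F\<^esub> w [^]\<^bsub>F\<^esub> d ^ (k + m) =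
        z [^]\<^bsub>F\<^esub> d ^ m \<oplus>\<^bsub>F\<^esub> w [^]\<^bsub>F\<^esub> d ^ m" for k
    using assms by (simp add: cheb_map_iterate cheb_power_sum[OF assms(1-4)] embed_eq_iff)
  ultimately show ?thesis
    by (simp add: periodic_pt_def pm_recurrent_def funpow_add)
qed

lemma tail_cheb_map:
  assumes "z \<in> carrier F" "w \<in> carrier F" "z \<otimes>\<^bsub>F\<^esub> w = \<one>\<^bsub>F\<^esub>" "z \<oplus>\<^bsub>F\<^esub> w = embed x"
    and "x \<in> {0..<P}" "d > 1"
  shows "tail (cheb_map p d) x = max_val_ratio d (group.ord (mult_of F) z)"
proof -
  interpret M: group "mult_of F"
    by (rule F.field_mult_group)
  have "z \<in> carrier (mult_of F)"
    using assms(1-3) by auto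
  moreover have "finite (carrier (mult_of F))"
    using finite_F by simp
  ultimately have "group.ord (mult_of F) z > 0"
    using M.ord_ge_1 by fastforce
  then show ?thesis
    unfolding tail_def using assms periodic_iff_pm_recurrent[OF assms(1-5)]
    by (simp add: Least_pm_recurrent)
qed

lemma tail_cheb_map_cases:
  assumes "x \<in> {0..<P}" "d > 1"
  shows "\<exists>r. (r dvd p - 1 \<or> r dvd p + 1) \<and> tail (cheb_map p d) x = max_val_ratio d r"
proof -
  obtain z w where zw: "z \<in> carrier F" "w \<in> carrier F" "z \<otimes>\<^bsub>F\<^esub> w = \<one>\<^bsub>F\<^esub>"
    and sum: "z \<oplus>\<^bsub>F\<^esub> w = embed x"
    using exists_inverse_pair by blast
  have "group.ord (mult_of F) z dvd p - 1 \<or> group.ord (mult_of F) z dvd p + 1"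
    using trace_in_embed_iff[OF zw] sum assms(1) by blast
  moreover have "tail (cheb_map p d) x = max_val_ratio d (group.ord (mult_of F) z)"
    using tail_cheb_map[OF zw sum assms] .
  ultimately show ?thesis
    by blast
qed

lemma tail_cheb_map_attained:
  assumes "N = p - 1 \<or> N = p + 1" "d > 1"
  shows "\<exists>x \<in> {0..<P}. tail (cheb_map p d) x = max_val_ratio d N"
proof -
  interpret M: group "mult_of F"
    by (rule F.field_mult_group)
  have "N dvd order (mult_of F)"
    using assms(1) unfolding order_mult_of_F by (metis dvd_triv_left dvd_triv_right)
  then obtain z where z: "z \<in> carrier (mult_of F)" and "M.ord z = N"
    using F.exists_elem_of_ord[OF finite_F] by blast
  define w where "w = inv\<^bsub>F\<^esub> z"
  have zw: "z \<in> carrier F" "w \<in> carrier F" "z \<otimes>\<^bsub>F\<^esub> w = \<one>\<^bsub>F\<^esub>"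
    using z by (simp_all add: w_def F.field_Units)
  moreover have "M.ord z dvd p - 1 \<or> M.ord z dvd p + 1"
    using \<open>M.ord z = N\<close> assms(1) by auto
  ultimately obtain x where x: "x \<in> {0..<P}" and sum: "z \<oplus>\<^bsub>F\<^esub> w = embed x"
    using trace_in_embed_iff by blast
  show ?thesis
    using tail_cheb_map[OF zw sum x assms(2)] \<open>M.ord z = N\<close> x by blast
qed

lemma Max_tail_cheb_map:
  assumes "d > 1"
  shows "Max ((\<lambda>x. tail (cheb_map p d) x) ` {0..<P}) =
    max (max_val_ratio d (p - 1)) (max_val_ratio d (p + 1))"
  using p_gt_2 assms tail_cheb_map_cases tail_cheb_map_attained by (intro Max_eq_max_val_ratio) auto

end

section \<open>The case p = 2 and the main theorem\<close>

lemma even_cheb_0: "even (poly (cheb k) (0::int))"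
  by (induction k rule: cheb.induct) auto

lemma even_cheb_1_iff: "even (poly (cheb k) (1::int)) \<longleftrightarrow> 3 dvd k"
  by (induction k rule: cheb.induct) (auto, presburger+)

lemma max_val_ratio_1: "d > 1 \<Longrightarrow> max_val_ratio d 1 = 0"
  using max_val_ratio_le_iff[of d 1 0] by simp

lemma prime_3: "prime (3::nat)"
proof -
  have "{2..<3::nat} = {2}"
    by auto
  then show ?thesis
    by (simp add: prime_nat_iff')
qed

lemma multiplicity_3: "prime q \<Longrightarrow> multiplicity q (3::nat) = (if q = 3 then 1 else 0)"
  using prime_3 by (auto simp: prime_multiplicity_other)

lemma tail_cheb_map_2:
  assumes "d > 1"
  shows "tail (cheb_map 2 d) 0 = max_val_ratio d 1" "tail (cheb_map 2 d) 1 = max_val_ratio d 3"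
proof -
  define f where "f = cheb_map 2 d"
  have f0: "f 0 = 0"
    using even_cheb_0[of d] by (simp add: f_def cheb_map_def)
  have f1: "f 1 = (if 3 dvd d then 0 else 1)"
    using even_cheb_1_iff[of d] by (auto simp: f_def cheb_map_def even_iff_mod_2_eq_zero odd_iff_mod_2_eq_one)
  have per0: "periodic_pt f 0"
    unfolding periodic_pt_def using f0 by (intro exI[of _ 1]) auto
  then show "tail f 0 = max_val_ratio d 1"
    using max_val_ratio_1[OF assms] by (simp add: tail_def)
  have mvr3: "max_val_ratio d 3 \<le> m \<longleftrightarrow> (3 dvd d \<longrightarrow> 1 \<le> m * multiplicity 3 d)" for m
    using max_val_ratio_le_iff[OF assms] assms by (auto simp: in_prime_factors_iff multiplicity_3)
  show "tail f 1 = max_val_ratio d 3"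
  proof (cases "3 dvd d")
    case False
    then have "periodic_pt f 1"
      unfolding periodic_pt_def using f1 by (intro exI[of _ 1]) auto
    then show ?thesis
      using mvr3[of 0] False by (simp add: tail_def)
  next
    case True
    have "(f ^^ Suc k) 1 = 0" for k
      by (induction k) (use f1 True f0 in auto)
    then have "\<not> periodic_pt f 1"
      unfolding periodic_pt_def by (metis gr0_implies_Suc zero_neq_one)
    have "tail f 1 = 1"
      unfolding tail_def
    proof (rule Least_equality)
      show "periodic_pt f ((f ^^ 1) 1)"
        using per0 f1 True by simp
      show "1 \<le> m" if "periodic_pt f ((f ^^ m) 1)" for m
        using that \<open>\<not> periodic_pt f 1\<close> by (cases m) auto
    qed
    moreover have "multiplicity 3 d > 0"
      using True assms prime_3 by (simp add: prime_multiplicity_gt_zero_iff)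
    ultimately show ?thesis
      using mvr3[of 0] mvr3[of 1] True by simp
  qed
qed

lemma Max_tail_cheb_map_2:
  assumes "d > 1"
  shows "Max ((\<lambda>x. tail (cheb_map 2 d) x) ` {0..<2}) = max (max_val_ratio d 1) (max_val_ratio d 3)"
proof -
  have domain: "{0..<2::int} = {0, 1}"
    by auto
  have "\<exists>r. (r dvd 1 \<or> r dvd 3) \<and> tail (cheb_map 2 d) x = max_val_ratio d r" if "x \<in> {0, 1}" for x
    using that tail_cheb_map_2[OF assms] by (auto intro: exI[of _ 1] exI[of _ 3])
  then show ?thesis
    unfolding domain using assms tail_cheb_map_2 by (intro Max_eq_max_val_ratio) auto
qed

lemma Max_image_max:
  fixes f g :: "'a \<Rightarrow> 'b::linorder"
  assumes "finite A" "A \<noteq> {}"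
  shows "Max ((\<lambda>q. max (f q) (g q)) ` A) = max (Max (f ` A)) (Max (g ` A))"
proof (rule antisym)
  show "Max ((\<lambda>q. max (f q) (g q)) ` A) \<le> max (Max (f ` A)) (Max (g ` A))"
    using assms by (auto simp: Max_le_iff intro: max.coboundedI1 max.coboundedI2)
  show "max (Max (f ` A)) (Max (g ` A)) \<le> Max ((\<lambda>q. max (f q) (g q)) ` A)"
    using assms by (intro max.boundedI)
      (auto simp: Max_le_iff intro: order.trans[OF max.cobounded1 Max_ge] order.trans[OF max.cobounded2 Max_ge])
qed

lemma exists_nonresidue:
  assumes p: "prime p" and "p > 2"
  shows "\<exists>n::int. [n ^ ((p - 1) div 2) = - 1] (mod int p)"
proof -
  obtain x where "residue_primroot p x"
    using prime_primitive_root_exists[OF _ p] assms(2) by auto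
  then have ox: "ord p x = p - 1"
    using p by (simp add: residue_primroot_def totient_prime)
  define m where "m = (p - 1) div 2"
  have m: "0 < m" "m < p - 1" "m * 2 = p - 1"
    using assms prime_odd_nat by (auto simp: m_def elim!: oddE)
  define h where "h = int x ^ m"
  have "[x ^ (p - 1) = 1] (mod p)"
    using ord[of x p] ox by simp
  then have "[h ^ 2 = 1] (mod int p)"
    unfolding h_def power_mult[symmetric] m(3) by (metis cong_int_iff of_nat_1 of_nat_power)
  then have "int p dvd (h - 1) * (h + 1)"
    by (simp add: cong_iff_dvd_diff power2_eq_square algebra_simps)
  then have "int p dvd h - 1 \<or> int p dvd h + 1"
    using p by (simp add: prime_dvd_mult_iff)
  moreover have "\<not> [x ^ m = 1] (mod p)"
    using ord_minimal[OF m(1)] m(2) ox by simp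
  then have "\<not> int p dvd h - 1"
    by (simp add: h_def cong_iff_dvd_diff flip: cong_int_iff)
  ultimately show ?thesis
    by (intro exI[of _ "int x"]) (simp add: h_def m_def cong_iff_dvd_diff)
qed

theorem mainTheorem6:
  fixes p d :: nat
  assumes "prime p" and "d > 1"
  shows "Max ((\<lambda>x. tail (cheb_map p d) x) ` {0..<int p}) =
         Max ((\<lambda>q. max (nat \<lceil>real (multiplicity q (p - 1)) / real (multiplicity q d)\<rceil>)
                        (nat \<lceil>real (multiplicity q (p + 1)) / real (multiplicity q d)\<rceil>))
              ` prime_factors d)"
proof -
  have "prime_factors d \<noteq> {}"
    using assms(2) prime_factors_nonempty by blast
  then have rhs: "Max ((\<lambda>q. max (nat \<lceil>real (multiplicity q (p - 1)) / real (multiplicity q d)\<rceil>)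
                        (nat \<lceil>real (multiplicity q (p + 1)) / real (multiplicity q d)\<rceil>))
              ` prime_factors d) = max (max_val_ratio d (p - 1)) (max_val_ratio d (p + 1))"
    unfolding max_val_ratio_def by (intro Max_image_max) auto
  show ?thesis
  proof (cases "p = 2")
    case True
    then show ?thesis
      using rhs Max_tail_cheb_map_2[OF assms(2)] by simp
  next
    case False
    then have "p > 2"
      using prime_ge_2_nat[OF assms(1)] by linarith
    then obtain n where "fp2 p n"
      using exists_nonresidue[OF assms(1)] assms(1) fp2.intro by blast
    then show ?thesis
      using rhs fp2.Max_tail_cheb_map[OF _ assms(2)] by simp
  qed
qed

end
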